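(* (a) For every $d \ge 1$, $\dfrac{F_n^- - \ln n}{\ln\ln n} \to 0$ in probability as $n \to \infty$. (b) If $d \ge 2$, then $\dfrac{F_n^- - \ln n}{\ln\ln n} \to 0$ almost surely.
   Context: Fix an integer $d \ge 1$. Let $X^{(1)}, X^{(2)}, \dots$ be i.i.d. random vectors in $\mathbb{R}^d$ with independent Exponential$(1)$ coordinates. For $x,y \in \mathbb{R}^d$ write $x \prec y$ if $x_j<y_j$ for all $j$, $x \le y$ if $x_j \le y_j$ for all $j$, and $x_+ := \sum_j x_j$. The record-setting region at time $n$ is $\mathrm{RS}_n := \{x \in \mathbb{R}^d : 0 \le x,\ x \not\prec X^{(i)} \text{ for all } 1 \le i \le n\}$, and its frontier $F_n$ is the topological boundary of $\mathrm{RS}_n$ relative to $[0,\infty)^d$. Define $F_n^- := \min\{x_+ : x \in F_n\}$. *)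

theory Defs
  imports "HOL-Probability.Probability"
begin

definition strict_below :: "real^'d \<Rightarrow> real^'d \<Rightarrow> bool" where
  "strict_below x y \<longleftrightarrow> (\<forall>j. x $ j < y $ j)"

definition orthant :: "(real^'d) set" where
  "orthant = {x. \<forall>j. 0 \<le> x $ j}"

definition RS :: "(nat \<Rightarrow> real^'d) \<Rightarrow> nat \<Rightarrow> (real^'d) set" where
  "RS X n = {x \<in> orthant. \<forall>i\<in>{1..n}. \<not> strict_below x (X i)}"

definition frontierRS :: "(nat \<Rightarrow> real^'d) \<Rightarrow> nat \<Rightarrow> (real^'d) set" where
  "frontierRS X n = (subtopology euclidean orthant) frontier_of (RS X n)"

definition Fminus :: "(nat \<Rightarrow> real^'d) \<Rightarrow> nat \<Rightarrow> real" where
  "Fminus X n = Inf ((\<lambda>x. \<Sum>j\<in>UNIV. x $ j) ` frontierRS X n)"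

end

theory Submission
  imports Defs "HOL-Real_Asymp.Real_Asymp"
begin

text \<open>
  \<open>F\<^sub>n\<^sup>- \<ge> s\<close> as soon as every point of the orthant with coordinate sum \<open>s\<close> is strictly dominated by
  one of the first \<open>n\<close> sample points, and \<open>F\<^sub>n\<^sup>- \<le> \<sigma>\<close> as soon as some point of coordinate sum \<open>\<sigma>\<close> is
  dominated by none of them. A fixed point of coordinate sum \<open>\<sigma>\<close> is dominated by a single sample
  point with probability \<open>e\<^sup>-\<^sup>\<sigma>\<close>, so at the levels \<open>ln n \<plusminus> \<epsilon> ln ln n\<close> both events fail with small
  probability: for the lower level it suffices to control the \<open>O((ln n)\<^sup>d)\<close> points of an integer
  grid, for the upper level a single point on a coordinate axis. For almost sure convergence Borel--Cantelli is applied along the dyadic blocks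
  \<open>2\<^sup>k \<le> n < 2\<^sup>k\<^sup>+\<^sup>1\<close>. The upper bound then needs \<open>d \<ge> 2\<close>: of \<open>K + 1\<close> well separated points on a
  segment in a coordinate plane, either two are dominated by the same sample point, which is
  unlikely, or all are dominated by distinct, independent sample points, and the probability of
  that is a \<open>(K + 1)\<close>-fold product, summable in \<open>k\<close> for large \<open>K\<close>.
\<close>

subsection \<open>Geometry of the record-setting region\<close>

definition coord_sum :: "real^'d \<Rightarrow> real" where
  "coord_sum x = (\<Sum>j\<in>UNIV. x $ j)"

lemma Fminus_eq_Inf_coord_sum: "Fminus P n = Inf (coord_sum ` frontierRS P n)"
  by (simp add: Fminus_def coord_sum_def)

lemma coord_sum_nonneg: "x \<in> orthant \<Longrightarrow> 0 \<le> coord_sum x"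
  by (auto simp: coord_sum_def orthant_def intro!: sum_nonneg)

lemma coord_component_le_coord_sum: "x \<in> orthant \<Longrightarrow> x $ j \<le> coord_sum x"
  unfolding coord_sum_def orthant_def by (intro member_le_sum) auto

lemma coord_sum_scaleR: "coord_sum (c *\<^sub>R x) = c * coord_sum x"
  by (simp add: coord_sum_def sum_distrib_left)

lemma coord_sum_add: "coord_sum (x + y) = coord_sum x + coord_sum y"
  by (simp add: coord_sum_def sum.distrib)

lemma coord_sum_axis: "coord_sum (axis j a) = a"
  by (simp add: coord_sum_def axis_def)

lemma axis_in_orthant: "0 \<le> a \<Longrightarrow> axis j a \<in> orthant"
  by (simp add: orthant_def axis_def)

lemma RS_eq: "RS P n = orthant \<inter> {x. \<forall>i\<in>{1..n}. \<exists>j. P i $ j \<le> x $ j}"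
  by (auto simp: RS_def strict_below_def not_less)

lemma closed_not_strictly_below:
  fixes P :: "nat \<Rightarrow> real^'d"
  shows "closed {x. \<forall>i\<in>{1..n}. \<exists>j. P i $ j \<le> x $ j}"
proof -
  have eq: "{x. \<forall>i\<in>{1..n}. \<exists>j. P i $ j \<le> x $ j} = (\<Inter>i\<in>{1..n}. \<Union>j. {x. P i $ j \<le> x $ j})"
    by auto
  show ?thesis
    unfolding eq by (intro closed_INT closed_Union ballI finite_imageI finite_UNIV)
      (auto intro!: closed_Collect_le continuous_intros)
qed

lemma closedin_RS: "closedin (subtopology euclidean orthant) (RS P n)"
  using closed_not_strictly_below[of n P] by (auto simp: RS_eq closedin_subtopology Int_commute)

lemma frontierRS_subset_RS: "frontierRS P n \<subseteq> RS P n"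
  using closure_of_closedin[OF closedin_RS] by (auto simp: frontierRS_def frontier_of_def)

lemma frontierRS_subset_orthant: "frontierRS P n \<subseteq> orthant"
  using frontierRS_subset_RS by (auto simp: RS_def)

lemma in_frontierRS:
  assumes x: "x \<in> RS P n"
    and outside: "\<And>e. e > 0 \<Longrightarrow> \<exists>w\<in>orthant - RS P n. dist w x < e"
  shows "x \<in> frontierRS P n"
proof -
  have "x \<notin> (subtopology euclidean orthant) interior_of (RS P n)"
  proof
    assume "x \<in> (subtopology euclidean orthant) interior_of (RS P n)"
    then obtain T where "open T" "x \<in> T" "T \<inter> orthant \<subseteq> RS P n"
      by (auto simp: interior_of_def openin_subtopology)
    moreover obtain e where "e > 0" "ball x e \<subseteq> T"
      using \<open>open T\<close> \<open>x \<in> T\<close> open_contains_ball by blast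
    moreover obtain w where "w \<in> orthant - RS P n" "dist w x < e"
      using outside \<open>e > 0\<close> by blast
    ultimately show False by (metis DiffE IntI dist_commute mem_ball subsetD)
  qed
  then show ?thesis
    using x closure_of_closedin[OF closedin_RS] by (auto simp: frontierRS_def frontier_of_def)
qed

lemma scaleR_in_frontierRS:
  assumes l: "l *\<^sub>R y \<in> RS P n" "0 < l"
    and below: "\<And>t. 0 \<le> t \<Longrightarrow> t < l \<Longrightarrow> t *\<^sub>R y \<in> orthant - RS P n"
  shows "l *\<^sub>R y \<in> frontierRS P n"
proof (rule in_frontierRS[OF l(1)])
  fix e :: real assume "e > 0"
  then have e: "e / (norm y + 1) > 0" by (simp add: add_nonneg_pos)
  define t where "t = max 0 (l - e / (norm y + 1))"
  have t: "0 \<le> t" "t < l" "l - t \<le> e / (norm y + 1)"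
    using l e by (auto simp: t_def)
  have "dist (t *\<^sub>R y) (l *\<^sub>R y) = (l - t) * norm y"
    using t by (simp add: dist_norm norm_minus_commute flip: scaleR_diff_left)
  also have "\<dots> \<le> e / (norm y + 1) * norm y"
    using t by (intro mult_right_mono) auto
  also have "\<dots> = e * (norm y / (norm y + 1))" by simp
  also have "\<dots> < e * 1"
    using \<open>e > 0\<close> by (intro mult_strict_left_mono) (simp_all add: divide_less_eq add_nonneg_pos)
  finally have "dist (t *\<^sub>R y) (l *\<^sub>R y) < e" by simp
  then show "\<exists>w\<in>orthant - RS P n. dist w (l *\<^sub>R y) < e"
    using below[OF t(1,2)] by blast
qed

text \<open>Shrinking a point of \<open>RS\<close> towards the origin, which is not in \<open>RS\<close>, leaves \<open>RS\<close> at a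
  frontier point with no larger coordinate sum.\<close>
lemma frontierRS_point_below:
  fixes P :: "nat \<Rightarrow> real^'d"
  assumes n: "n \<ge> 1" and pos: "\<And>j. P 1 $ j > 0" and y: "y \<in> RS P n"
  shows "\<exists>z\<in>frontierRS P n. coord_sum z \<le> coord_sum y"
proof -
  have y_orth: "y \<in> orthant" using y by (simp add: RS_def)
  have scaled_orth: "t *\<^sub>R y \<in> orthant" if "t \<ge> 0" for t
    using y_orth that by (auto simp: orthant_def)
  define T where "T = {t. 0 \<le> t \<and> t \<le> 1 \<and> t *\<^sub>R y \<in> RS P n}"
  have "T = {0..1} \<inter> (\<lambda>t. t *\<^sub>R y) -` {x. \<forall>i\<in>{1..n}. \<exists>j. P i $ j \<le> x $ j}"
    using scaled_orth by (auto simp: T_def RS_eq)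
  then have "closed T"
    by (simp only:) (intro closed_Int closed_atLeastAtMost continuous_closed_vimage
        closed_not_strictly_below continuous_intros)
  moreover have "1 \<in> T" using y by (simp add: T_def)
  moreover have bdd: "bdd_below T" by (auto simp: T_def bdd_below_def)
  ultimately have lT: "Inf T \<in> T" using closed_contains_Inf by blast
  define l where "l = Inf T"
  have "0 \<notin> RS P n"
    using n pos by (auto simp: RS_def strict_below_def intro!: bexI[of _ 1])
  then have l: "0 < l" "l \<le> 1" "l *\<^sub>R y \<in> RS P n"
    using lT by (auto simp: T_def l_def less_le)
  have "t *\<^sub>R y \<in> orthant - RS P n" if "0 \<le> t" "t < l" for t
  proof -
    have "t \<notin> T"
      using cInf_lower[OF _ bdd, of t] that by (auto simp: l_def)
    then show ?thesis using that l scaled_orth by (auto simp: T_def)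
  qed
  then have "l *\<^sub>R y \<in> frontierRS P n"
    using l by (intro scaleR_in_frontierRS)
  moreover have "coord_sum (l *\<^sub>R y) \<le> coord_sum y"
    using l coord_sum_nonneg[OF y_orth] by (simp add: coord_sum_scaleR mult_left_le_one_le)
  ultimately show ?thesis by blast
qed

lemma Fminus_le_coord_sum:
  fixes P :: "nat \<Rightarrow> real^'d"
  assumes "n \<ge> 1" and "\<And>j. P 1 $ j > 0" and "y \<in> RS P n"
  shows "Fminus P n \<le> coord_sum y"
proof -
  obtain z where z: "z \<in> frontierRS P n" "coord_sum z \<le> coord_sum y"
    using frontierRS_point_below[OF assms] by blast
  have "bdd_below (coord_sum ` frontierRS P n)"
    using frontierRS_subset_orthant coord_sum_nonneg by (intro bdd_belowI[where m=0]) blast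
  then show ?thesis
    using z by (auto simp: Fminus_eq_Inf_coord_sum intro: cInf_lower2)
qed

lemma Fminus_ge_if_dominated:
  fixes P :: "nat \<Rightarrow> real^'d"
  assumes n: "n \<ge> 1" and pos: "\<And>i j. i \<in> {1..n} \<Longrightarrow> P i $ j > 0"
    and dominated: "\<And>x. x \<in> orthant \<Longrightarrow> coord_sum x \<le> s \<Longrightarrow> \<exists>i\<in>{1..n}. strict_below x (P i)"
  shows "s \<le> Fminus P n"
proof -
  define y where "y = (\<chi> j. \<Sum>i\<in>{1..n}. P i $ j :: real^'d)"
  have "P i $ j \<le> y $ j" if "i \<in> {1..n}" for i j
    unfolding y_def using that pos by (simp, intro member_le_sum) (auto intro: less_imp_le)
  moreover have "y \<in> orthant"
    using sum_nonneg[of "{1..n}" "\<lambda>i. P i $ _"] pos[THEN less_imp_le] by (auto simp: orthant_def y_def)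
  ultimately have "y \<in> RS P n" by (auto simp: RS_def strict_below_def not_less)
  then obtain z where "z \<in> frontierRS P n"
    using frontierRS_point_below[OF n] pos n by force
  then show ?thesis
    unfolding Fminus_eq_Inf_coord_sum
  proof (intro cInf_greatest)
    fix v assume "v \<in> coord_sum ` frontierRS P n"
    then obtain x where "x \<in> RS P n" "v = coord_sum x"
      using frontierRS_subset_RS by blast
    then show "s \<le> v" using dominated by (force simp: RS_def)
  qed blast
qed

text \<open>A finite set of integer points such that every point of the orthant with coordinate
  sum at most \<open>s\<close> lies componentwise below one of them (round every coordinate up).\<close>
definition grid :: "real \<Rightarrow> (real^'d) set" where
  "grid s = {g. (\<exists>f\<in>PiE UNIV (\<lambda>_. {0..nat \<lceil>s\<rceil>}). g = (\<chi> j. real (f j)))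
              \<and> coord_sum g \<le> s + CARD('d)}"

lemma grid_subset_image: "grid s \<subseteq> (\<lambda>f. \<chi> j. real (f j)) ` PiE UNIV (\<lambda>_. {0..nat \<lceil>s\<rceil>})"
  by (auto simp: grid_def)

lemma finite_grid: "finite (grid s)"
  by (rule finite_subset[OF grid_subset_image]) (auto intro!: finite_PiE)

lemma card_grid_le:
  assumes "s \<ge> 0"
  shows "real (card (grid s :: (real^'d) set)) \<le> (s + 2) ^ CARD('d)"
proof -
  have "card (grid s :: (real^'d) set) \<le> card (PiE (UNIV :: 'd set) (\<lambda>_. {0..nat \<lceil>s\<rceil>}))"
    by (rule order_trans[OF card_mono[OF _ grid_subset_image] card_image_le])
       (auto intro!: finite_PiE)
  also have "\<dots> = (nat \<lceil>s\<rceil> + 1) ^ CARD('d)" by (simp add: card_PiE)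
  finally have "real (card (grid s :: (real^'d) set)) \<le> real ((nat \<lceil>s\<rceil> + 1) ^ CARD('d))"
    by linarith
  also have "\<dots> = (real (nat \<lceil>s\<rceil>) + 1) ^ CARD('d)" by (simp add: add.commute)
  also have "\<dots> \<le> (s + 2) ^ CARD('d)"
    using assms by (intro power_mono) linarith+
  finally show ?thesis .
qed

lemma grid_subset_orthant: "grid s \<subseteq> orthant"
  by (auto simp: grid_def orthant_def)

lemma grid_dominates:
  fixes x :: "real^'d"
  assumes x: "x \<in> orthant" "coord_sum x \<le> s"
  shows "\<exists>g\<in>grid s. \<forall>j. x $ j \<le> g $ j"
proof -
  define f where "f j = (if j \<in> (UNIV::'d set) then nat \<lceil>x $ j\<rceil> else undefined)" for j
  define g where "g = (\<chi> j. real (f j) :: real^'d)"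
  have x_nonneg: "0 \<le> x $ j" for j using x(1) by (auto simp: orthant_def)
  have "nat \<lceil>x $ j\<rceil> \<le> nat \<lceil>s\<rceil>" for j
    using coord_component_le_coord_sum[OF x(1), of j] x(2) by (intro nat_mono ceiling_mono) simp
  then have "f \<in> PiE UNIV (\<lambda>_. {0..nat \<lceil>s\<rceil>})"
    by (simp add: f_def PiE_def Pi_iff)
  moreover have g: "x $ j \<le> g $ j" "g $ j \<le> x $ j + 1" for j
    using x_nonneg[of j] by (auto simp: g_def f_def)
  moreover have "coord_sum g \<le> coord_sum x + CARD('d)"
    unfolding coord_sum_def using sum_mono[of UNIV "\<lambda>j. g $ j" "\<lambda>j. x $ j + 1"] g
    by (simp add: sum.distrib)
  ultimately have "g \<in> grid s" using x(2) by (auto simp: grid_def g_def)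
  then show ?thesis using g by blast
qed

lemma Fminus_ge_if_grid_dominated:
  fixes P :: "nat \<Rightarrow> real^'d"
  assumes n: "n \<ge> 1" and pos: "\<And>i j. i \<in> {1..n} \<Longrightarrow> P i $ j > 0"
    and dominated: "\<And>g. g \<in> grid s \<Longrightarrow> \<exists>i\<in>{1..n}. strict_below g (P i)"
  shows "s \<le> Fminus P n"
proof (rule Fminus_ge_if_dominated[OF n pos])
  fix x :: "real^'d" assume "x \<in> orthant" "coord_sum x \<le> s"
  then obtain g where "g \<in> grid s" "\<forall>j. x $ j \<le> g $ j" using grid_dominates by blast
  with dominated show "\<exists>i\<in>{1..n}. strict_below x (P i)"
    unfolding strict_below_def by (meson le_less_trans)
qed

definition segment_point :: "'d \<Rightarrow> 'd \<Rightarrow> real \<Rightarrow> real \<Rightarrow> real^'d" where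
  "segment_point j1 j2 \<sigma> t = axis j1 t + axis j2 (\<sigma> - t)"

lemma coord_sum_segment_point: "coord_sum (segment_point j1 j2 \<sigma> t) = \<sigma>"
  by (simp add: segment_point_def coord_sum_add coord_sum_axis)

lemma segment_point_in_orthant: "0 \<le> t \<Longrightarrow> t \<le> \<sigma> \<Longrightarrow> segment_point j1 j2 \<sigma> t \<in> orthant"
  by (auto simp: segment_point_def orthant_def axis_def)

lemma coord_sum_sup_segment_points:
  assumes "j1 \<noteq> j2"
  shows "coord_sum (sup (segment_point j1 j2 \<sigma> t) (segment_point j1 j2 \<sigma> t')) = \<sigma> + \<bar>t - t'\<bar>"
proof -
  have "sup (segment_point j1 j2 \<sigma> t) (segment_point j1 j2 \<sigma> t')
      = axis j1 (max t t') + axis j2 (max (\<sigma> - t) (\<sigma> - t'))"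
    using assms by (auto simp: vec_eq_iff segment_point_def sup_vec_def axis_def sup_max)
  then show ?thesis
    by (simp add: coord_sum_add coord_sum_axis max_def abs_if)
qed

lemma segment_points_spread:
  fixes K :: nat
  assumes j: "j1 \<noteq> j2" and \<sigma>: "0 \<le> \<sigma>"
  defines "t \<equiv> \<lambda>m. real m * \<sigma> / real (Suc K)"
  shows "\<And>m. m \<le> K \<Longrightarrow> segment_point j1 j2 \<sigma> (t m) \<in> orthant"
    and "\<And>m m'. m \<noteq> m' \<Longrightarrow>
           \<sigma> + \<sigma> / real (Suc K) \<le> coord_sum (sup (segment_point j1 j2 \<sigma> (t m)) (segment_point j1 j2 \<sigma> (t m')))"
proof -
  fix m assume "m \<le> K"
  then have "real m * \<sigma> \<le> \<sigma> * real (Suc K)"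
    using \<sigma> by (simp add: mult.commute mult_left_mono)
  then show "segment_point j1 j2 \<sigma> (t m) \<in> orthant"
    using \<sigma> by (intro segment_point_in_orthant) (simp_all add: t_def pos_divide_le_eq)
next
  fix m m' :: nat assume "m \<noteq> m'"
  then have "1 * (\<sigma> / real (Suc K)) \<le> \<bar>real m - real m'\<bar> * (\<sigma> / real (Suc K))"
    using \<sigma> by (intro mult_right_mono) auto
  also have "\<dots> = \<bar>t m - t m'\<bar>"
    using \<sigma> by (simp add: t_def abs_mult flip: diff_divide_distrib left_diff_distrib)
  finally show "\<sigma> + \<sigma> / real (Suc K) \<le> coord_sum (sup (segment_point j1 j2 \<sigma> (t m)) (segment_point j1 j2 \<sigma> (t m')))"
    by (simp add: coord_sum_sup_segment_points[OF j])
qed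

lemma mult_exp_neg_ln_plus_ln_ln:
  fixes x c :: real
  assumes x: "x > 1"
  shows "x * exp (- (ln x + c * ln (ln x))) = ln x powr (- c)"
proof -
  have "exp (- (ln x + c * ln (ln x))) = exp (- c * ln (ln x)) / exp (ln x)"
    by (simp add: exp_diff[symmetric] algebra_simps)
  then show ?thesis
    using x by (simp add: powr_def)
qed

lemma tendsto_ln_powr_neg:
  assumes "e > 0"
  shows "(\<lambda>n. ln (real n) powr (- e)) \<longlonglongrightarrow> 0"
proof -
  have "((\<lambda>x::real. x powr (- e)) \<longlongrightarrow> 0) at_top" using assms by real_asymp
  then have "((\<lambda>x. ln x powr (- e)) \<longlongrightarrow> 0) at_top"
    by (rule filterlim_compose) (rule ln_at_top)
  then show ?thesis by (rule filterlim_compose) (rule filterlim_real_sequentially)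
qed

lemma tendsto_ln_powr_mult_exp_neg:
  assumes "e > 0" "c > 0"
  shows "(\<lambda>n. (ln (real n) + 2) powr d * exp (- c * ln (real n) powr e)) \<longlonglongrightarrow> 0"
proof -
  have "((\<lambda>x::real. (x + 2) powr d * exp (- c * x powr e)) \<longlongrightarrow> 0) at_top"
    using assms by real_asymp
  then have "((\<lambda>x. (ln x + 2) powr d * exp (- c * ln x powr e)) \<longlongrightarrow> 0) at_top"
    by (rule filterlim_compose) (rule ln_at_top)
  then show ?thesis by (rule filterlim_compose) (rule filterlim_real_sequentially)
qed

lemma eventually_ln_ln_pos: "eventually (\<lambda>n. 0 < ln (ln (real n))) sequentially"
proof -
  have "filterlim (\<lambda>x::real. ln (ln x)) at_top at_top" by real_asymp
  then have "filterlim (\<lambda>n. ln (ln (real n))) at_top sequentially"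
    by (rule filterlim_compose) (rule filterlim_real_sequentially)
  then show ?thesis by (simp add: filterlim_at_top_dense)
qed

lemma eventually_mult_ln_ln_le_ln: "eventually (\<lambda>n. e * ln (ln (real n)) \<le> ln (real n)) sequentially"
proof -
  have "filterlim (\<lambda>x::real. x - e * ln x) at_top at_top" by real_asymp
  then have "filterlim (\<lambda>x. ln x - e * ln (ln x)) at_top at_top"
    by (rule filterlim_compose) (rule ln_at_top)
  then have "filterlim (\<lambda>n. ln (real n) - e * ln (ln (real n))) at_top sequentially"
    by (rule filterlim_compose) (rule filterlim_real_sequentially)
  then have "eventually (\<lambda>n. 0 \<le> ln (real n) - e * ln (ln (real n))) sequentially"
    using filterlim_at_top[THEN iffD1, rule_format, of _ sequentially 0] by blast
  then show ?thesis by (rule eventually_mono) simp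
qed

lemma summable_power_mult_exp_neg_powr:
  fixes c e :: real
  assumes "c > 0" "e > 0"
  shows "summable (\<lambda>k. (real k + a) ^ m * exp (- c * real k powr e))"
proof (rule summable_comparison_test_ev)
  have "(\<lambda>x::real. (x + a) ^ m * exp (- c * x powr e)) \<in> o(\<lambda>x. inverse (x ^ 2))"
    using assms by real_asymp
  then have "eventually (\<lambda>x::real. norm ((x + a) ^ m * exp (- c * x powr e)) \<le> 1 * norm (inverse (x ^ 2))) at_top"
    by (rule landau_o.smallD) simp
  then have "eventually (\<lambda>x::real. norm ((x + a) ^ m * exp (- c * x powr e)) \<le> inverse (x ^ 2)) at_top"
    by eventually_elim simp
  then show "eventually (\<lambda>k. norm ((real k + a) ^ m * exp (- c * real k powr e)) \<le> inverse (real k ^ 2)) sequentially"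
    using filterlim_real_sequentially by (rule eventually_compose_filterlim)
  show "summable (\<lambda>k. inverse (real k ^ 2))" by (rule inverse_power_summable) simp
qed

lemma summable_mult_powr_neg:
  fixes c s :: real
  assumes "c > 0" "s > 1"
  shows "summable (\<lambda>k. C * (real k * c) powr (- s))"
proof -
  have "summable (\<lambda>k. C * c powr (- s) * real k powr (- s))"
    using assms(2) by (intro summable_mult) (simp add: summable_real_powr_iff)
  then show ?thesis
    using assms(1) by (simp add: powr_mult mult_ac)
qed

lemma one_minus_power_le_exp: "0 \<le> a \<Longrightarrow> a \<le> 1 \<Longrightarrow> (1 - a) ^ N \<le> exp (- (real N * a))"
proof -
  assume a: "0 \<le> a" "a \<le> 1"
  have "(1 - a) ^ N \<le> exp (- a) ^ N"
    using a by (intro power_mono) (auto simp: exp_ge_add_one_self[of "-a", simplified])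
  then show ?thesis by (simp add: exp_of_nat_mult[symmetric])
qed

lemma tendsto_divide_zero_if_eventually_abs_le:
  fixes a b :: "nat \<Rightarrow> real"
  assumes "\<And>r. eventually (\<lambda>n. \<bar>a n\<bar> \<le> b n / real (Suc r)) sequentially"
    and "eventually (\<lambda>n. 0 < b n) sequentially"
  shows "(\<lambda>n. a n / b n) \<longlonglongrightarrow> 0"
proof (rule tendstoI)
  fix e :: real assume "e > 0"
  then obtain r where r: "inverse (real (Suc r)) < e" using reals_Archimedean by blast
  show "eventually (\<lambda>n. dist (a n / b n) 0 < e) sequentially"
    using assms(1)[of r] assms(2)
  proof eventually_elim
    case (elim n)
    then have "\<bar>a n / b n\<bar> \<le> inverse (real (Suc r))"
      by (simp add: abs_divide pos_divide_le_eq field_simps)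
    then show ?case using r by simp
  qed
qed

lemma eventually_sequentially_dyadic:
  assumes "eventually B sequentially"
    and "\<And>k n. B k \<Longrightarrow> 2 ^ k \<le> n \<Longrightarrow> n < 2 ^ Suc k \<Longrightarrow> R n"
  shows "eventually R sequentially"
proof -
  obtain K where K: "\<And>k. k \<ge> K \<Longrightarrow> B k" using assms(1) by (auto simp: eventually_sequentially)
  have "R n" if n: "n \<ge> 2 ^ K" for n
  proof -
    have "n \<ge> 1" using n by (metis le_trans one_le_numeral one_le_power)
    then obtain k where k: "2 ^ k \<le> n" "n < 2 ^ Suc k" using ex_power_ivl1[of 2 n] by auto
    have "K \<le> k"
    proof (rule ccontr)
      assume "\<not> K \<le> k"
      then have "(2::nat) ^ Suc k \<le> 2 ^ K" by (intro power_increasing) auto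
      then show False using k n by linarith
    qed
    then show ?thesis using assms(2)[OF K k] by simp
  qed
  then show ?thesis by (auto simp: eventually_sequentially)
qed

lemma one_le_ln_two_power:
  assumes "k \<ge> 2"
  shows "1 \<le> ln (2 ^ k :: real)"
proof -
  have "exp 1 \<le> (2 ^ 2 :: real)" using exp_le by simp
  also have "\<dots> \<le> 2 ^ k" using assms by (intro power_increasing) auto
  finally show ?thesis by (simp add: ln_ge_iff)
qed

lemma ln_bounds_dyadic:
  assumes "k \<ge> 2" "2 ^ k \<le> n" "n < 2 ^ Suc k"
  shows "ln (2 ^ k) \<le> ln (real n)" "ln (real n) < ln (2 ^ Suc k)"
    "ln (ln (2 ^ k)) \<le> ln (ln (real n))"
proof -
  have n: "(2 ^ k :: real) \<le> real n" "real n < 2 ^ Suc k"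
    using assms(2,3) by (metis of_nat_le_iff of_nat_numeral of_nat_power,
      metis of_nat_less_iff of_nat_numeral of_nat_power)
  moreover have "0 < real n" using n(1) by (meson order.strict_trans2 zero_less_numeral zero_less_power)
  ultimately show ln_le: "ln (2 ^ k) \<le> ln (real n)" "ln (real n) < ln (2 ^ Suc k)"
    by simp_all
  show "ln (ln (2 ^ k)) \<le> ln (ln (real n))"
    using one_le_ln_two_power[OF assms(1)] by (intro ln_mono[OF ln_le(1)]) linarith
qed

definition lower_level :: "real \<Rightarrow> nat \<Rightarrow> real" where
  "lower_level \<epsilon> k = ln (2 ^ Suc k) - \<epsilon> * ln (ln (2 ^ k))"

definition upper_level :: "real \<Rightarrow> nat \<Rightarrow> real" where
  "upper_level \<epsilon> k = ln (2 ^ k) + \<epsilon> * ln (ln (2 ^ k))"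

lemma ln_minus_ln_ln_le_lower_level:
  assumes "0 \<le> \<epsilon>" "k \<ge> 2" "2 ^ k \<le> n" "n < 2 ^ Suc k"
  shows "ln (real n) - \<epsilon> * ln (ln (real n)) \<le> lower_level \<epsilon> k"
  using ln_bounds_dyadic[OF assms(2-)] mult_left_mono[OF ln_bounds_dyadic(3)[OF assms(2-)] assms(1)]
  unfolding lower_level_def by linarith

lemma upper_level_le_ln_plus_ln_ln:
  assumes "0 \<le> \<epsilon>" "k \<ge> 2" "2 ^ k \<le> n" "n < 2 ^ Suc k"
  shows "upper_level \<epsilon> k \<le> ln (real n) + \<epsilon> * ln (ln (real n))"
  using ln_bounds_dyadic[OF assms(2-)] mult_left_mono[OF ln_bounds_dyadic(3)[OF assms(2-)] assms(1)]
  unfolding upper_level_def by linarith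

lemma upper_level_nonneg: "0 \<le> \<epsilon> \<Longrightarrow> k \<ge> 2 \<Longrightarrow> 0 \<le> upper_level \<epsilon> k"
  using one_le_ln_two_power[of k] by (simp add: upper_level_def)

lemma eventually_lower_level_nonneg: "eventually (\<lambda>k. 0 \<le> lower_level \<epsilon> k) sequentially"
proof -
  have "filterlim (\<lambda>x::real. (x + 1) * ln 2 - \<epsilon> * ln (x * ln 2)) at_top at_top" by real_asymp
  then have "filterlim (\<lambda>k. (real k + 1) * ln 2 - \<epsilon> * ln (real k * ln 2)) at_top sequentially"
    by (rule filterlim_compose) (rule filterlim_real_sequentially)
  then have "eventually (\<lambda>k. 0 \<le> (real k + 1) * ln 2 - \<epsilon> * ln (real k * ln 2)) sequentially"
    using filterlim_at_top[THEN iffD1, rule_format, of _ sequentially 0] by blast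
  then show ?thesis
    by (rule eventually_mono) (simp add: lower_level_def ln_realpow algebra_simps del: power_Suc)
qed

subsection \<open>Independent exponential sample points\<close>

lemma finite_distinct_pairs: "finite Ms \<Longrightarrow> finite {(m, m'). m \<in> Ms \<and> m' \<in> Ms \<and> m \<noteq> m'}"
  by (rule finite_subset[of _ "Ms \<times> Ms"]) auto

lemma finite_injective_PiE:
  fixes N :: nat
  assumes "finite Ms"
  shows "finite {w \<in> Ms \<rightarrow>\<^sub>E {1..N}. inj_on w Ms}"
proof -
  have "finite (Ms \<rightarrow>\<^sub>E {1..N})" using assms by (intro finite_PiE) auto
  then show ?thesis by (rule finite_subset[rotated]) auto
qed

lemma (in prob_space) prob_UN_le_card_mult:
  assumes "finite I" "\<And>i. i \<in> I \<Longrightarrow> A i \<in> events" "\<And>i. i \<in> I \<Longrightarrow> prob (A i) \<le> b"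
  shows "prob (\<Union>i\<in>I. A i) \<le> real (card I) * b"
proof -
  have "prob (\<Union>i\<in>I. A i) \<le> (\<Sum>i\<in>I. prob (A i))"
    using assms by (intro finite_measure_subadditive_finite) auto
  also have "\<dots> \<le> real (card I) * b"
    using assms(3) by (intro sum_bounded_above) auto
  finally show ?thesis .
qed

locale exponential_sample = prob_space M for M :: "'a measure" +
  fixes X :: "nat \<Rightarrow> 'a \<Rightarrow> real^'d"
  assumes indep_coordinates: "indep_vars (\<lambda>_. borel) (\<lambda>(i, j) \<omega>. X i \<omega> $ j) ({1..} \<times> UNIV)"
    and exponential_coordinates: "\<And>i j. i \<ge> 1 \<Longrightarrow>
           distributed M lborel (\<lambda>\<omega>. X i \<omega> $ j) (\<lambda>x. ennreal (exponential_density 1 x))"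
begin

lemma measurable_coordinate[measurable]: "i \<ge> 1 \<Longrightarrow> (\<lambda>\<omega>. X i \<omega> $ j) \<in> borel_measurable M"
  using distributed_measurable[OF exponential_coordinates]
  by (simp add: measurable_lborel1 cong: measurable_cong_sets)

lemma prob_coordinate_gt:
  assumes "i \<ge> 1" "0 \<le> c"
  shows "prob {\<omega>\<in>space M. c < X i \<omega> $ j} = exp (- c)"
  using exponential_distributedD_gt[OF exponential_coordinates[OF assms(1)] assms(2)] by simp

text \<open>Exponential coordinates vanish only on a null set; off it the origin is not in \<open>RS\<close>.\<close>
definition positive_outcomes :: "'a set" where
  "positive_outcomes = {\<omega>\<in>space M. \<forall>i\<ge>1. \<forall>j. 0 < X i \<omega> $ j}"

lemma positive_outcomes_in_events: "positive_outcomes \<in> events"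
proof -
  have "positive_outcomes = space M \<inter> (\<Inter>i\<in>{1..}. \<Inter>j. {\<omega>\<in>space M. 0 < X i \<omega> $ j})"
    by (auto simp: positive_outcomes_def)
  also have "\<dots> \<in> events"
    by (intro sets.Int sets.countable_INT sets.finite_INT) auto
  finally show ?thesis .
qed

lemma AE_positive_outcomes: "AE \<omega> in M. \<omega> \<in> positive_outcomes"
proof -
  have "AE \<omega> in M. 0 < X i \<omega> $ j" if "i \<ge> 1" for i j
    using prob_coordinate_gt[OF that order.refl, of j] that
    by (subst prob_Collect_eq_1[symmetric]) auto
  then show ?thesis by (auto simp: positive_outcomes_def AE_all_countable)
qed

lemma prob_not_positive_outcomes: "prob (space M - positive_outcomes) = 0"
  using AE_positive_outcomes positive_outcomes_in_events
  by (simp add: prob_compl prob_eq_1 AE_iff_measurable[symmetric])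

definition coordinate_events :: "nat \<times> 'd \<Rightarrow> 'a set set" where
  "coordinate_events p = {(\<lambda>(i, j) \<omega>. X i \<omega> $ j) p -` A \<inter> space M | A. A \<in> sets borel}"

lemma indep_coordinate_events: "indep_sets coordinate_events ({1..} \<times> UNIV)"
  using indep_coordinates unfolding indep_vars_def2 coordinate_events_def by simp

lemma coordinate_gt_in_coordinate_events:
  "{\<omega>\<in>space M. c < X i \<omega> $ j} \<in> coordinate_events (i, j)"
  unfolding coordinate_events_def by (auto intro!: exI[of _ "{c<..}"])

definition row_events :: "nat \<Rightarrow> 'a set set" where
  "row_events i = sigma_sets (space M) (\<Union>p\<in>{i} \<times> UNIV. coordinate_events p)"

lemma sigma_algebra_row_events: "sigma_algebra (space M) (row_events i)"
  unfolding row_events_def coordinate_events_def by (intro sigma_algebra_sigma_sets) auto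

lemma indep_row_events: "indep_sets row_events {1..}"
  unfolding row_events_def[abs_def]
proof (rule indep_sets_collect_sigma)
  have eq: "(\<Union>i\<in>{1..}. {i} \<times> (UNIV :: 'd set)) = {1..} \<times> UNIV" by auto
  show "indep_sets coordinate_events (\<Union>i\<in>{1..}. {i} \<times> UNIV)"
    unfolding eq by (rule indep_coordinate_events)
  show "Int_stable (coordinate_events p)" for p
  proof (rule Int_stableI)
    fix a b assume "a \<in> coordinate_events p" "b \<in> coordinate_events p"
    then obtain A B where "A \<in> sets borel" "B \<in> sets borel"
      and "a = (\<lambda>(i, j) \<omega>. X i \<omega> $ j) p -` A \<inter> space M" "b = (\<lambda>(i, j) \<omega>. X i \<omega> $ j) p -` B \<inter> space M"
      by (auto simp: coordinate_events_def)
    then show "a \<inter> b \<in> coordinate_events p"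
      unfolding coordinate_events_def by (auto intro!: exI[of _ "A \<inter> B"])
  qed
  show "disjoint_family_on (\<lambda>i. {i} \<times> (UNIV :: 'd set)) {1..}"
    by (auto simp: disjoint_family_on_def)
qed

lemma prob_INT_row_events:
  assumes K: "finite K" "K \<noteq> {}" and w: "inj_on w K" "w ` K \<subseteq> {1..}"
    and B: "\<And>m. m \<in> K \<Longrightarrow> B m \<in> row_events (w m)"
  shows "prob (\<Inter>m\<in>K. B m) = (\<Prod>m\<in>K. prob (B m))"
proof -
  define A where "A i = B (the_inv_into K w i)" for i
  have A: "A (w m) = B m" if "m \<in> K" for m
    using that w(1) by (simp add: A_def the_inv_into_f_f)
  have "A \<in> Pi (w ` K) row_events" using A B by auto
  moreover have "w ` K \<subseteq> {1..}" "w ` K \<noteq> {}" "finite (w ` K)" using K w by auto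
  ultimately have "prob (\<Inter>i\<in>w ` K. A i) = (\<Prod>i\<in>w ` K. prob (A i))"
    using indep_row_events unfolding indep_sets_def by blast
  moreover have "(\<Inter>i\<in>w ` K. A i) = (\<Inter>m\<in>K. B m)" using A by auto
  ultimately show ?thesis
    using w(1) A by (simp add: prod.reindex)
qed

definition dom_event :: "nat \<Rightarrow> real^'d \<Rightarrow> 'a set" where
  "dom_event i y = {\<omega>\<in>space M. strict_below y (X i \<omega>)}"

lemma dom_event_eq_INT: "dom_event i y = (\<Inter>j. {\<omega>\<in>space M. y $ j < X i \<omega> $ j})"
  by (auto simp: dom_event_def strict_below_def)

lemma dom_event_in_row_events: "dom_event i y \<in> row_events i"
proof -
  interpret sigma_algebra "space M" "row_events i" by (rule sigma_algebra_row_events)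
  have "{\<omega>\<in>space M. y $ j < X i \<omega> $ j} \<in> row_events i" for j
    unfolding row_events_def using coordinate_gt_in_coordinate_events by blast
  then show ?thesis unfolding dom_event_eq_INT by (intro finite_INT) auto
qed

lemma compl_dom_event_in_row_events: "space M - dom_event i y \<in> row_events i"
proof -
  interpret sigma_algebra "space M" "row_events i" by (rule sigma_algebra_row_events)
  show ?thesis using dom_event_in_row_events by blast
qed

lemma dom_event_in_events: "i \<ge> 1 \<Longrightarrow> dom_event i y \<in> events"
  unfolding dom_event_eq_INT by (intro sets.finite_INT) auto

lemma dom_event_Int: "dom_event i y \<inter> dom_event i z = dom_event i (sup y z)"
  by (auto simp: dom_event_def strict_below_def sup_vec_def sup_max)

lemma prob_dom_event:
  assumes i: "i \<ge> 1" and y: "y \<in> orthant"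
  shows "prob (dom_event i y) = exp (- coord_sum y)"
proof -
  define F where "F p = {\<omega>\<in>space M. y $ snd p < X i \<omega> $ snd p}" for p :: "nat \<times> 'd"
  have "F \<in> Pi ({i} \<times> UNIV) coordinate_events"
    using coordinate_gt_in_coordinate_events by (auto simp: F_def)
  moreover have "{i} \<times> UNIV \<subseteq> {1..} \<times> (UNIV :: 'd set)" using i by auto
  moreover have "\<forall>J\<subseteq>{1..} \<times> UNIV. J \<noteq> {} \<longrightarrow> finite J \<longrightarrow>
      (\<forall>A\<in>Pi J coordinate_events. prob (\<Inter>j\<in>J. A j) = (\<Prod>j\<in>J. prob (A j)))"
    using indep_coordinate_events unfolding indep_sets_def by blast
  ultimately have "prob (\<Inter>p\<in>{i} \<times> UNIV. F p) = (\<Prod>p\<in>{i} \<times> UNIV. prob (F p))"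
    by simp
  moreover have "dom_event i y = (\<Inter>p\<in>{i} \<times> UNIV. F p)"
    by (auto simp: dom_event_eq_INT F_def)
  moreover have "(\<Prod>p\<in>{i} \<times> UNIV. prob (F p)) = (\<Prod>j\<in>UNIV. exp (- y $ j))"
  proof -
    have "{i} \<times> UNIV = Pair i ` (UNIV :: 'd set)" by auto
    then show ?thesis
      using y i by (simp only:, subst prod.reindex) (auto simp: F_def orthant_def prob_coordinate_gt inj_on_def)
  qed
  ultimately show ?thesis
    by (simp add: coord_sum_def exp_sum[symmetric] sum_negf)
qed

definition dominated_upto :: "nat \<Rightarrow> real^'d \<Rightarrow> 'a set" where
  "dominated_upto N y = (\<Union>i\<in>{1..N}. dom_event i y)"

lemma dominated_upto_in_events: "dominated_upto N y \<in> events"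
  unfolding dominated_upto_def by (intro sets.finite_UN dom_event_in_events) auto

lemma prob_dominated_upto_le:
  assumes "y \<in> orthant"
  shows "prob (dominated_upto N y) \<le> real N * exp (- coord_sum y)"
proof -
  have "prob (dominated_upto N y) \<le> (\<Sum>i\<in>{1..N}. prob (dom_event i y))"
    unfolding dominated_upto_def
    by (intro finite_measure_subadditive_finite) (auto intro: dom_event_in_events)
  also have "\<dots> = real N * exp (- coord_sum y)"
    using assms by (simp add: prob_dom_event)
  finally show ?thesis .
qed

lemma prob_not_dominated_upto:
  assumes "y \<in> orthant"
  shows "prob (space M - dominated_upto N y) = (1 - exp (- coord_sum y)) ^ N"
proof (cases "N = 0")
  case False
  have "space M - dominated_upto N y = (\<Inter>i\<in>{1..N}. space M - dom_event i y)"
    using False by (auto simp: dominated_upto_def)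
  also have "prob \<dots> = (\<Prod>i\<in>{1..N}. prob (space M - dom_event i y))"
    using False by (intro prob_INT_row_events[where w=id]) (auto intro: compl_dom_event_in_row_events)
  also have "\<dots> = (1 - exp (- coord_sum y)) ^ N"
    using assms by (simp add: prob_compl dom_event_in_events prob_dom_event)
  finally show ?thesis .
qed (simp add: dominated_upto_def prob_space)

definition grid_gap :: "nat \<Rightarrow> real \<Rightarrow> 'a set" where
  "grid_gap N s = (\<Union>g\<in>grid s. space M - dominated_upto N g)"

lemma grid_gap_in_events: "grid_gap N s \<in> events"
  unfolding grid_gap_def using finite_grid by (intro sets.finite_UN) (auto intro: dominated_upto_in_events)

lemma prob_grid_gap_le:
  assumes "s \<ge> 0"
  shows "prob (grid_gap N s) \<le> (s + 2) ^ CARD('d) * exp (- (real N * exp (- (s + CARD('d)))))"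
proof -
  have "prob (grid_gap N s) \<le> (\<Sum>g\<in>grid s. prob (space M - dominated_upto N g))"
    unfolding grid_gap_def
    by (intro finite_measure_subadditive_finite finite_grid) (auto intro: dominated_upto_in_events)
  also have "\<dots> \<le> (\<Sum>g\<in>(grid s :: (real^'d) set). exp (- (real N * exp (- (s + CARD('d))))))"
  proof (rule sum_mono)
    fix g :: "real^'d" assume g: "g \<in> grid s"
    then have "g \<in> orthant" "coord_sum g \<le> s + CARD('d)"
      using grid_subset_orthant by (auto simp: grid_def)
    then have "prob (space M - dominated_upto N g) \<le> (1 - exp (- (s + CARD('d)))) ^ N"
      by (auto simp: prob_not_dominated_upto intro!: power_mono coord_sum_nonneg)
    also have "\<dots> \<le> exp (- (real N * exp (- (s + CARD('d)))))"
      using assms by (intro one_minus_power_le_exp) auto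
    finally show "prob (space M - dominated_upto N g) \<le> exp (- (real N * exp (- (s + CARD('d)))))" .
  qed
  also have "\<dots> \<le> (s + 2) ^ CARD('d) * exp (- (real N * exp (- (s + CARD('d)))))"
    using card_grid_le[OF assms] by (simp add: mult_right_mono)
  finally show ?thesis .
qed

lemma Fminus_ge_if_not_grid_gap:
  assumes "\<omega> \<in> positive_outcomes" "1 \<le> N" "N \<le> n" "\<omega> \<notin> grid_gap N s"
  shows "s \<le> Fminus (\<lambda>i. X i \<omega>) n"
proof (rule Fminus_ge_if_grid_dominated)
  fix g :: "real^'d" assume "g \<in> grid s"
  then obtain i where "i \<in> {1..N}" "strict_below g (X i \<omega>)"
    using assms by (auto simp: grid_gap_def dominated_upto_def dom_event_def positive_outcomes_def)
  then show "\<exists>i\<in>{1..n}. strict_below g (X i \<omega>)" using assms(3) by (intro bexI[of _ i]) auto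
qed (use assms in \<open>auto simp: positive_outcomes_def\<close>)

lemma Fminus_le_if_not_dominated_upto:
  assumes "\<omega> \<in> positive_outcomes" "1 \<le> n" "n \<le> N" "y \<in> orthant" "\<omega> \<notin> dominated_upto N y"
  shows "Fminus (\<lambda>i. X i \<omega>) n \<le> coord_sum y"
proof (rule Fminus_le_coord_sum)
  show "y \<in> RS (\<lambda>i. X i \<omega>) n"
    using assms by (auto simp: RS_def dominated_upto_def dom_event_def positive_outcomes_def)
qed (use assms in \<open>auto simp: positive_outcomes_def\<close>)

subsection \<open>Convergence in probability\<close>

lemma Fminus_deviation_event:
  assumes n: "n \<ge> 1" and s: "0 \<le> s" and a: "0 \<le> a"
  obtains A where "A \<in> events"
    "{\<omega>\<in>space M. \<not> (s \<le> Fminus (\<lambda>i. X i \<omega>) n \<and> Fminus (\<lambda>i. X i \<omega>) n \<le> a)} \<subseteq> A"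
    "prob A \<le> real n * exp (- a) + (s + 2) ^ CARD('d) * exp (- (real n * exp (- (s + CARD('d)))))"
proof -
  fix j :: 'd
  define A where "A = (space M - positive_outcomes) \<union> dominated_upto n (axis j a) \<union> grid_gap n s"
  have "A \<in> events"
    by (auto simp: A_def intro!: positive_outcomes_in_events dominated_upto_in_events grid_gap_in_events)
  moreover have "{\<omega>\<in>space M. \<not> (s \<le> Fminus (\<lambda>i. X i \<omega>) n \<and> Fminus (\<lambda>i. X i \<omega>) n \<le> a)} \<subseteq> A"
  proof (rule subsetI, rule ccontr)
    fix \<omega> assume \<omega>: "\<omega> \<in> {\<omega>\<in>space M. \<not> (s \<le> Fminus (\<lambda>i. X i \<omega>) n \<and> Fminus (\<lambda>i. X i \<omega>) n \<le> a)}"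
      and "\<omega> \<notin> A"
    then have "\<omega> \<in> positive_outcomes" "\<omega> \<notin> dominated_upto n (axis j a)" "\<omega> \<notin> grid_gap n s"
      by (auto simp: A_def)
    then have "s \<le> Fminus (\<lambda>i. X i \<omega>) n" "Fminus (\<lambda>i. X i \<omega>) n \<le> coord_sum (axis j a)"
      using n axis_in_orthant[OF a, of j]
      by (auto intro: Fminus_ge_if_not_grid_gap intro!: Fminus_le_if_not_dominated_upto)
    then show False using \<omega> by (simp add: coord_sum_axis)
  qed
  moreover have "prob A \<le> real n * exp (- a) + (s + 2) ^ CARD('d) * exp (- (real n * exp (- (s + CARD('d)))))"
  proof -
    have "prob A \<le> prob (space M - positive_outcomes) + prob (dominated_upto n (axis j a)) + prob (grid_gap n s)"
      unfolding A_def using positive_outcomes_in_events dominated_upto_in_events grid_gap_in_events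
      by (meson measure_Un_le sets.Diff sets.top order_trans add_right_mono sets.Un)
    then show ?thesis
      using prob_not_positive_outcomes prob_grid_gap_le[OF s, of n]
        prob_dominated_upto_le[OF axis_in_orthant[OF a, of j], of n, unfolded coord_sum_axis]
      by linarith
  qed
  ultimately show ?thesis by (rule that)
qed

lemma Fminus_normalized_deviation_event:
  assumes n: "real n > 1" and \<epsilon>: "\<epsilon> > 0"
    and lnln_pos: "0 < ln (ln (real n))" and lnln_le: "\<epsilon> * ln (ln (real n)) \<le> ln (real n)"
  obtains A where "A \<in> events"
    "{\<omega>\<in>space M. \<bar>(Fminus (\<lambda>i. X i \<omega>) n - ln (real n)) / ln (ln (real n))\<bar> > \<epsilon>} \<subseteq> A"
    "prob A \<le> ln (real n) powr (- \<epsilon>)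
       + (ln (real n) + 2) powr CARD('d) * exp (- exp (- real CARD('d)) * ln (real n) powr \<epsilon>)"
proof -
  define L where "L = ln (real n)"
  define LL where "LL = ln (ln (real n))"
  have "0 < \<epsilon> * LL" using lnln_pos \<epsilon> by (simp add: LL_def)
  then have s: "0 \<le> L - \<epsilon> * LL" and a: "0 \<le> L + \<epsilon> * LL"
    using lnln_le by (simp_all add: L_def LL_def)
  have "n \<ge> 1" using n by simp
  then obtain A where A: "A \<in> events"
    "{\<omega>\<in>space M. \<not> (L - \<epsilon> * LL \<le> Fminus (\<lambda>i. X i \<omega>) n \<and> Fminus (\<lambda>i. X i \<omega>) n \<le> L + \<epsilon> * LL)} \<subseteq> A"
    "prob A \<le> real n * exp (- (L + \<epsilon> * LL))
       + (L - \<epsilon> * LL + 2) ^ CARD('d) * exp (- (real n * exp (- (L - \<epsilon> * LL + CARD('d)))))"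
    using s a by (rule Fminus_deviation_event)
  have "\<bar>(Fminus (\<lambda>i. X i \<omega>) n - L) / LL\<bar> \<le> \<epsilon>"
    if "L - \<epsilon> * LL \<le> Fminus (\<lambda>i. X i \<omega>) n" "Fminus (\<lambda>i. X i \<omega>) n \<le> L + \<epsilon> * LL" for \<omega>
    using that lnln_pos by (simp add: LL_def abs_divide pos_divide_le_eq abs_le_iff)
  then have "{\<omega>\<in>space M. \<bar>(Fminus (\<lambda>i. X i \<omega>) n - L) / LL\<bar> > \<epsilon>} \<subseteq> A"
    using A(2) by force
  moreover have "real n * exp (- (L + \<epsilon> * LL)) = L powr (- \<epsilon>)"
    using mult_exp_neg_ln_plus_ln_ln[OF n] by (simp add: L_def LL_def)
  moreover have "real n * exp (- (L - \<epsilon> * LL + CARD('d))) = exp (- real CARD('d)) * L powr \<epsilon>"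
    using mult_exp_neg_ln_plus_ln_ln[OF n, of "- \<epsilon>"]
    by (simp add: L_def LL_def exp_add exp_diff exp_minus field_simps)
  moreover have "(L - \<epsilon> * LL + 2) ^ CARD('d) \<le> (L + 2) powr CARD('d)"
  proof -
    have "(L - \<epsilon> * LL + 2) ^ CARD('d) \<le> (L + 2) ^ CARD('d)"
      using \<open>0 < \<epsilon> * LL\<close> \<open>0 \<le> L - \<epsilon> * LL\<close> by (intro power_mono) auto
    moreover have "0 < L + 2" using \<open>0 \<le> L - \<epsilon> * LL\<close> \<open>0 < \<epsilon> * LL\<close> by linarith
    ultimately show ?thesis by (simp add: powr_realpow)
  qed
  ultimately show ?thesis
    using A(1,3) by (intro that[of A]) (auto simp: L_def LL_def intro: order_trans mult_right_mono)
qed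

lemma Fminus_normalized_in_probability:
  "\<forall>\<epsilon>>0. \<forall>\<delta>>0. \<forall>\<^sub>F n in sequentially. \<exists>A\<in>sets M.
     {\<omega>\<in>space M. \<bar>(Fminus (\<lambda>i. X i \<omega>) n - ln (real n)) / ln (ln (real n))\<bar> > \<epsilon>} \<subseteq> A
     \<and> measure M A < \<delta>"
proof (intro allI impI)
  fix \<epsilon> \<delta> :: real assume \<epsilon>: "\<epsilon> > 0" and \<delta>: "\<delta> > 0"
  define f where "f n = ln (real n) powr (- \<epsilon>)
      + (ln (real n) + 2) powr CARD('d) * exp (- exp (- real CARD('d)) * ln (real n) powr \<epsilon>)" for n
  have "f \<longlonglongrightarrow> 0 + 0"
    unfolding f_def using \<epsilon> by (intro tendsto_add tendsto_ln_powr_neg tendsto_ln_powr_mult_exp_neg) auto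
  then have "eventually (\<lambda>n. f n < \<delta>) sequentially"
    using \<delta> by (simp add: order_tendstoD)
  then show "\<forall>\<^sub>F n in sequentially. \<exists>A\<in>sets M.
     {\<omega>\<in>space M. \<bar>(Fminus (\<lambda>i. X i \<omega>) n - ln (real n)) / ln (ln (real n))\<bar> > \<epsilon>} \<subseteq> A
     \<and> measure M A < \<delta>"
    using eventually_gt_at_top[of 1] eventually_ln_ln_pos eventually_mult_ln_ln_le_ln[of \<epsilon>]
  proof eventually_elim
    case (elim n)
    then have "real n > 1" by simp
    then obtain A where "A \<in> events"
      "{\<omega>\<in>space M. \<bar>(Fminus (\<lambda>i. X i \<omega>) n - ln (real n)) / ln (ln (real n))\<bar> > \<epsilon>} \<subseteq> A"
      "prob A \<le> f n"
      unfolding f_def using \<epsilon> elim(3,4) by (rule Fminus_normalized_deviation_event)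
    then show ?case using \<open>f n < \<delta>\<close> by auto
  qed
qed

subsection \<open>Almost sure convergence\<close>

lemma prob_grid_gap_lower_level_le:
  assumes \<epsilon>: "0 \<le> \<epsilon>" and k: "k \<ge> 2" and s: "0 \<le> lower_level \<epsilon> k"
  shows "prob (grid_gap (2 ^ k) (lower_level \<epsilon> k))
    \<le> (real k + 3) ^ CARD('d) * exp (- (exp (- real CARD('d)) / 2 * ln 2 powr \<epsilon> * real k powr \<epsilon>))"
proof -
  define s where "s = lower_level \<epsilon> k"
  have lnln: "0 \<le> ln (ln (2 ^ k :: real))"
    using one_le_ln_two_power[OF k] by simp
  have "s \<le> real k + 1"
  proof -
    have "ln (2 ^ Suc k :: real) = real (Suc k) * ln 2"
      by (simp add: ln_realpow del: power_Suc)
    also have "\<dots> \<le> real (Suc k) * 1"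
      using ln_2_less_1 by (intro mult_left_mono) auto
    finally have "ln (2 ^ Suc k :: real) \<le> real k + 1" by simp
    then show ?thesis using mult_nonneg_nonneg[OF \<epsilon> lnln] unfolding s_def lower_level_def by linarith
  qed
  then have pw: "(s + 2) ^ CARD('d) \<le> (real k + 3) ^ CARD('d)"
    using s by (intro power_mono) (auto simp: s_def)
  have ex: "real (2 ^ k) * exp (- (s + CARD('d)))
      = exp (- real CARD('d)) / 2 * ln 2 powr \<epsilon> * real k powr \<epsilon>"
  proof -
    have x: "(2 ^ k :: real) > 1" using k by simp
    have "real (2 ^ k) * exp (- (s + CARD('d)))
        = exp (- real CARD('d)) / 2 * (2 ^ k * exp (- (ln (2 ^ k) + (- \<epsilon>) * ln (ln (2 ^ k)))))"
      by (simp add: s_def lower_level_def ln_mult exp_add exp_diff exp_minus field_simps)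
    also have "\<dots> = exp (- real CARD('d)) / 2 * (real k * ln 2) powr \<epsilon>"
      by (subst mult_exp_neg_ln_plus_ln_ln[OF x]) (simp add: ln_realpow)
    finally show ?thesis by (simp add: powr_mult)
  qed
  have "prob (grid_gap (2 ^ k) s) \<le> (s + 2) ^ CARD('d) * exp (- (real (2 ^ k) * exp (- (s + CARD('d)))))"
    unfolding s_def by (rule prob_grid_gap_le[OF s])
  also have "\<dots> \<le> (real k + 3) ^ CARD('d) * exp (- (exp (- real CARD('d)) / 2 * ln 2 powr \<epsilon> * real k powr \<epsilon>))"
    unfolding ex using pw by (intro mult_right_mono) auto
  finally show ?thesis by (simp add: s_def)
qed

lemma summable_prob_grid_gap_lower_level:
  assumes \<epsilon>: "\<epsilon> > 0"
  shows "summable (\<lambda>k. prob (grid_gap (2 ^ k) (lower_level \<epsilon> k)))"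
proof (rule summable_comparison_test_ev)
  define c where "c = exp (- real CARD('d)) / 2 * ln 2 powr \<epsilon>"
  show "eventually (\<lambda>k. norm (prob (grid_gap (2 ^ k) (lower_level \<epsilon> k)))
      \<le> (real k + 3) ^ CARD('d) * exp (- c * real k powr \<epsilon>)) sequentially"
    using eventually_ge_at_top[of 2] eventually_lower_level_nonneg[of \<epsilon>]
    by eventually_elim (use prob_grid_gap_lower_level_le \<epsilon> in \<open>simp add: c_def\<close>)
  show "summable (\<lambda>k. (real k + 3) ^ CARD('d) * exp (- c * real k powr \<epsilon>))"
    using \<epsilon> by (intro summable_power_mult_exp_neg_powr) (simp_all add: c_def)
qed

lemma AE_eventually_Fminus_ge:
  assumes \<epsilon>: "\<epsilon> > 0"
  shows "AE \<omega> in M. eventually (\<lambda>n. ln (real n) - \<epsilon> * ln (ln (real n)) \<le> Fminus (\<lambda>i. X i \<omega>) n) sequentially"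
proof -
  from summable_prob_grid_gap_lower_level[OF \<epsilon>]
  have "AE \<omega> in M. eventually (\<lambda>k. \<omega> \<in> space M - grid_gap (2 ^ k) (lower_level \<epsilon> k)) sequentially"
    by (intro borel_cantelli_AE1) (auto simp: grid_gap_in_events emeasure_eq_measure)
  then show ?thesis
    using AE_positive_outcomes
  proof eventually_elim
    case (elim \<omega>)
    have "eventually (\<lambda>k. \<omega> \<notin> grid_gap (2 ^ k) (lower_level \<epsilon> k) \<and> 2 \<le> k) sequentially"
      using elim(1) eventually_ge_at_top[of 2] by eventually_elim auto
    then show ?case
    proof (rule eventually_sequentially_dyadic)
      fix k n :: nat
      assume k: "\<omega> \<notin> grid_gap (2 ^ k) (lower_level \<epsilon> k) \<and> 2 \<le> k" and n: "2 ^ k \<le> n" "n < 2 ^ Suc k"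
      have "lower_level \<epsilon> k \<le> Fminus (\<lambda>i. X i \<omega>) n"
        using k n elim(2) by (intro Fminus_ge_if_not_grid_gap) auto
      then show "ln (real n) - \<epsilon> * ln (ln (real n)) \<le> Fminus (\<lambda>i. X i \<omega>) n"
        using ln_minus_ln_ln_le_lower_level[of \<epsilon> k n] \<epsilon> k n by linarith
    qed
  qed
qed

definition shared_dominator_event :: "nat \<Rightarrow> (nat \<Rightarrow> real^'d) \<Rightarrow> nat set \<Rightarrow> 'a set" where
  "shared_dominator_event N p Ms = (\<Union>(i, m, m')\<in>{1..N} \<times> {(m, m'). m \<in> Ms \<and> m' \<in> Ms \<and> m \<noteq> m'}.
     dom_event i (sup (p m) (p m')))"

definition distinct_dominators_event :: "nat \<Rightarrow> (nat \<Rightarrow> real^'d) \<Rightarrow> nat set \<Rightarrow> 'a set" where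
  "distinct_dominators_event N p Ms = (\<Union>w\<in>{w \<in> Ms \<rightarrow>\<^sub>E {1..N}. inj_on w Ms}. \<Inter>m\<in>Ms. dom_event (w m) (p m))"

text \<open>Pigeonhole: if each \<open>p m\<close> is dominated by one of the first \<open>N\<close> points, either two \<open>p m\<close> share a
  dominating point, or they are dominated by pairwise distinct, hence independent, points.\<close>
lemma INT_dominated_upto_subset:
  "(\<Inter>m\<in>Ms. dominated_upto N (p m)) \<subseteq> shared_dominator_event N p Ms \<union> distinct_dominators_event N p Ms"
proof
  fix \<omega> assume "\<omega> \<in> (\<Inter>m\<in>Ms. dominated_upto N (p m))"
  then have "\<forall>m\<in>Ms. \<exists>i. i \<in> {1..N} \<and> \<omega> \<in> dom_event i (p m)"
    unfolding dominated_upto_def by blast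
  from bchoice[OF this] obtain f
    where f: "\<forall>m\<in>Ms. f m \<in> {1..N} \<and> \<omega> \<in> dom_event (f m) (p m)" ..
  show "\<omega> \<in> shared_dominator_event N p Ms \<union> distinct_dominators_event N p Ms"
  proof (cases "inj_on f Ms")
    case True
    then have "restrict f Ms \<in> {w \<in> Ms \<rightarrow>\<^sub>E {1..N}. inj_on w Ms}"
      using f by (simp add: restrict_PiE_iff inj_on_def)
    then show ?thesis
      using f unfolding distinct_dominators_event_def by (intro UnI2 UN_I[of "restrict f Ms"]) auto
  next
    case False
    then obtain m m' where m: "m \<in> Ms" "m' \<in> Ms" "m \<noteq> m'" "f m = f m'"
      by (auto simp: inj_on_def)
    have "\<omega> \<in> dom_event (f m) (p m) \<inter> dom_event (f m) (p m')"
      using bspec[OF f m(1)] bspec[OF f m(2)] m(4) by (metis IntI)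
    then have "\<omega> \<in> dom_event (f m) (sup (p m) (p m'))" by (simp only: dom_event_Int)
    then show ?thesis
      using f m unfolding shared_dominator_event_def by (intro UnI1 UN_I[of "(f m, m, m')"]) auto
  qed
qed

lemma shared_dominator_event_in_events: "finite Ms \<Longrightarrow> shared_dominator_event N p Ms \<in> events"
  unfolding shared_dominator_event_def
  by (intro sets.finite_UN finite_cartesian_product finite_distinct_pairs)
    (auto split: prod.splits intro: dom_event_in_events)

lemma distinct_dominators_event_in_events:
  "finite Ms \<Longrightarrow> Ms \<noteq> {} \<Longrightarrow> distinct_dominators_event N p Ms \<in> events"
  unfolding distinct_dominators_event_def
  by (intro sets.finite_UN sets.finite_INT finite_injective_PiE)
    (auto simp: PiE_def Pi_def intro: dom_event_in_events)

lemma prob_shared_dominator_event_le: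
  assumes Ms: "finite Ms" and p: "\<And>m. m \<in> Ms \<Longrightarrow> p m \<in> orthant"
    and sup: "\<And>m m'. m \<in> Ms \<Longrightarrow> m' \<in> Ms \<Longrightarrow> m \<noteq> m' \<Longrightarrow> \<sigma> + h \<le> coord_sum (sup (p m) (p m'))"
  shows "prob (shared_dominator_event N p Ms) \<le> real N * real (card Ms) ^ 2 * exp (- (\<sigma> + h))"
proof -
  define Pairs where "Pairs = {1..N} \<times> {(m, m'). m \<in> Ms \<and> m' \<in> Ms \<and> m \<noteq> m'}"
  have "prob (shared_dominator_event N p Ms) \<le> real (card Pairs) * exp (- (\<sigma> + h))"
    unfolding shared_dominator_event_def Pairs_def[symmetric]
  proof (rule prob_UN_le_card_mult)
    show "finite Pairs" using Ms by (simp add: Pairs_def finite_distinct_pairs)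
    fix t assume "t \<in> Pairs"
    then obtain i m m' where t: "t = (i, m, m')" "i \<in> {1..N}" "m \<in> Ms" "m' \<in> Ms" "m \<noteq> m'"
      by (auto simp: Pairs_def)
    show "(case t of (i, m, m') \<Rightarrow> dom_event i (sup (p m) (p m'))) \<in> events"
      using t by (simp add: dom_event_in_events)
    have "sup (p m) (p m') \<in> orthant"
      using p[OF t(3)] by (auto simp: orthant_def sup_vec_def le_supI1)
    then have "prob (dom_event i (sup (p m) (p m'))) = exp (- coord_sum (sup (p m) (p m')))"
      using t(2) by (intro prob_dom_event) auto
    also have "\<dots> \<le> exp (- (\<sigma> + h))"
      using sup[OF t(3-5)] by simp
    finally show "prob (case t of (i, m, m') \<Rightarrow> dom_event i (sup (p m) (p m'))) \<le> exp (- (\<sigma> + h))"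
      using t(1) by simp
  qed
  also have "\<dots> \<le> real N * real (card Ms) ^ 2 * exp (- (\<sigma> + h))"
  proof (rule mult_right_mono)
    have "card {(m, m'). m \<in> Ms \<and> m' \<in> Ms \<and> m \<noteq> m'} \<le> card (Ms \<times> Ms)"
      using Ms by (intro card_mono) auto
    then have "card Pairs \<le> N * card Ms ^ 2"
      by (simp add: Pairs_def card_cartesian_product power2_eq_square)
    then show "real (card Pairs) \<le> real N * real (card Ms) ^ 2"
      by (metis of_nat_le_iff of_nat_mult of_nat_power)
  qed simp
  finally show ?thesis .
qed

lemma prob_distinct_dominators_event_le:
  assumes Ms: "finite Ms" "Ms \<noteq> {}"
    and p: "\<And>m. m \<in> Ms \<Longrightarrow> p m \<in> orthant" "\<And>m. m \<in> Ms \<Longrightarrow> coord_sum (p m) = \<sigma>"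
  shows "prob (distinct_dominators_event N p Ms) \<le> real N ^ card Ms * exp (- \<sigma>) ^ card Ms"
proof -
  define W where "W = {w \<in> Ms \<rightarrow>\<^sub>E {1..N}. inj_on w Ms}"
  have "prob (distinct_dominators_event N p Ms) \<le> real (card W) * exp (- \<sigma>) ^ card Ms"
    unfolding distinct_dominators_event_def W_def[symmetric]
  proof (rule prob_UN_le_card_mult)
    show "finite W" unfolding W_def using Ms(1) by (rule finite_injective_PiE)
    fix w assume w: "w \<in> W"
    then have w_range: "\<And>m. m \<in> Ms \<Longrightarrow> w m \<in> {1..N}" by (auto simp: W_def)
    show "(\<Inter>m\<in>Ms. dom_event (w m) (p m)) \<in> events"
      using Ms w_range by (intro sets.finite_INT dom_event_in_events) auto
    have "prob (\<Inter>m\<in>Ms. dom_event (w m) (p m)) = (\<Prod>m\<in>Ms. prob (dom_event (w m) (p m)))"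
      using Ms w w_range by (intro prob_INT_row_events) (auto simp: W_def dom_event_in_row_events)
    also have "\<dots> = (\<Prod>m\<in>Ms. exp (- \<sigma>))"
      using w_range p by (intro prod.cong refl) (simp add: prob_dom_event)
    finally show "prob (\<Inter>m\<in>Ms. dom_event (w m) (p m)) \<le> exp (- \<sigma>) ^ card Ms" by simp
  qed
  also have "\<dots> \<le> real N ^ card Ms * exp (- \<sigma>) ^ card Ms"
  proof (rule mult_right_mono)
    have "card W \<le> card (Ms \<rightarrow>\<^sub>E {1..N})"
      using Ms(1) by (intro card_mono finite_PiE) (auto simp: W_def)
    then have "card W \<le> N ^ card Ms" by (simp add: card_PiE Ms(1))
    then show "real (card W) \<le> real N ^ card Ms"
      by (metis of_nat_le_iff of_nat_power)
  qed simp
  finally show ?thesis .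
qed

lemma prob_all_dominated_upto_le:
  fixes p :: "nat \<Rightarrow> real^'d"
  assumes Ms: "finite Ms" "Ms \<noteq> {}"
    and p: "\<And>m. m \<in> Ms \<Longrightarrow> p m \<in> orthant" "\<And>m. m \<in> Ms \<Longrightarrow> coord_sum (p m) = \<sigma>"
    and sup: "\<And>m m'. m \<in> Ms \<Longrightarrow> m' \<in> Ms \<Longrightarrow> m \<noteq> m' \<Longrightarrow> \<sigma> + h \<le> coord_sum (sup (p m) (p m'))"
  shows "prob (\<Inter>m\<in>Ms. dominated_upto N (p m))
       \<le> real N * real (card Ms) ^ 2 * exp (- (\<sigma> + h)) + real N ^ card Ms * exp (- \<sigma>) ^ card Ms"
proof -
  have "prob (\<Inter>m\<in>Ms. dominated_upto N (p m))
      \<le> prob (shared_dominator_event N p Ms \<union> distinct_dominators_event N p Ms)"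
    using Ms INT_dominated_upto_subset
    by (intro finite_measure_mono sets.Un shared_dominator_event_in_events distinct_dominators_event_in_events)
  also have "\<dots> \<le> prob (shared_dominator_event N p Ms) + prob (distinct_dominators_event N p Ms)"
    using Ms by (intro measure_Un_le shared_dominator_event_in_events distinct_dominators_event_in_events)
  also have "\<dots> \<le> real N * real (card Ms) ^ 2 * exp (- (\<sigma> + h)) + real N ^ card Ms * exp (- \<sigma>) ^ card Ms"
    using assms by (intro add_mono prob_shared_dominator_event_le prob_distinct_dominators_event_le)
  finally show ?thesis .
qed

definition segment_event :: "real \<Rightarrow> nat \<Rightarrow> 'd \<Rightarrow> 'd \<Rightarrow> nat \<Rightarrow> 'a set" where
  "segment_event \<epsilon> K j1 j2 k = (\<Inter>m\<in>{0..K}. dominated_upto (2 ^ Suc k)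
      (segment_point j1 j2 (upper_level \<epsilon> k) (real m * upper_level \<epsilon> k / real (Suc K))))"

lemma segment_event_in_events: "segment_event \<epsilon> K j1 j2 k \<in> events"
  unfolding segment_event_def by (intro sets.finite_INT dominated_upto_in_events) auto

lemma prob_segment_event_le:
  assumes j: "j1 \<noteq> j2" and \<epsilon>: "0 \<le> \<epsilon>" and k: "k \<ge> 2"
  shows "prob (segment_event \<epsilon> K j1 j2 k)
    \<le> 2 * real (Suc K) ^ 2 * exp (- ln 2 / real (Suc K)) ^ k
      + 2 ^ Suc K * (real k * ln 2) powr (- (\<epsilon> * real (Suc K)))"
proof -
  define \<sigma> where "\<sigma> = upper_level \<epsilon> k"
  define t where "t = 2 * (real k * ln 2) powr (- \<epsilon>)"
  have L: "ln (2 ^ k :: real) = real k * ln 2" by (simp add: ln_realpow)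
  have kl: "1 \<le> real k * ln 2" using one_le_ln_two_power[OF k] L by simp
  have \<sigma>: "real k * ln 2 \<le> \<sigma>"
    using kl \<epsilon> by (simp add: \<sigma>_def upper_level_def L)
  have Nt: "real (2 ^ Suc k) * exp (- \<sigma>) = t"
    using mult_exp_neg_ln_plus_ln_ln[of "2 ^ k" \<epsilon>] k
    by (simp add: t_def \<sigma>_def upper_level_def L)
  have "prob (segment_event \<epsilon> K j1 j2 k)
      \<le> real (2 ^ Suc k) * real (card {0..K}) ^ 2 * exp (- (\<sigma> + \<sigma> / real (Suc K)))
        + real (2 ^ Suc k) ^ card {0..K} * exp (- \<sigma>) ^ card {0..K}"
    unfolding segment_event_def \<sigma>_def[symmetric]
    using segment_points_spread[OF j, where K = K] \<sigma> kl
    by (intro prob_all_dominated_upto_le coord_sum_segment_point) auto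
  also have "\<dots> = real (Suc K) ^ 2 * t * exp (- (\<sigma> / real (Suc K))) + t ^ Suc K"
    using exp_add[of "- \<sigma>" "- (\<sigma> / real (Suc K))"]
    by (simp add: Nt[symmetric] power_mult_distrib mult_ac del: power_Suc)
  also have "\<dots> \<le> 2 * real (Suc K) ^ 2 * exp (- ln 2 / real (Suc K)) ^ k
      + 2 ^ Suc K * (real k * ln 2) powr (- (\<epsilon> * real (Suc K)))"
  proof (rule add_mono)
    have "(real k * ln 2) powr (- \<epsilon>) \<le> 1"
      using ge_one_powr_ge_zero[OF kl \<epsilon>] by (simp add: powr_minus inverse_le_1_iff)
    then have "t \<le> 2" by (simp add: t_def)
    moreover have "exp (- (\<sigma> / real (Suc K))) \<le> exp (- ln 2 / real (Suc K)) ^ k"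
      using divide_right_mono[OF \<sigma>, of "real (Suc K)"] by (simp add: exp_of_nat_mult[symmetric])
    ultimately show "real (Suc K) ^ 2 * t * exp (- (\<sigma> / real (Suc K)))
        \<le> 2 * real (Suc K) ^ 2 * exp (- ln 2 / real (Suc K)) ^ k"
      by (simp add: mult_mono mult_ac)
    have "((real k * ln 2) powr (- \<epsilon>)) ^ Suc K = (real k * ln 2) powr (- (\<epsilon> * real (Suc K)))"
      using k by (subst powr_power) (auto simp: algebra_simps)
    then show "t ^ Suc K \<le> 2 ^ Suc K * (real k * ln 2) powr (- (\<epsilon> * real (Suc K)))"
      by (simp add: t_def power_mult_distrib del: power_Suc)
  qed
  finally show ?thesis .
qed

lemma Fminus_le_upper_level_if_not_segment_event:
  assumes "\<omega> \<in> positive_outcomes" "\<omega> \<notin> segment_event \<epsilon> K j1 j2 k"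
    and "j1 \<noteq> j2" "0 \<le> \<epsilon>" "k \<ge> 2" "2 ^ k \<le> n" "n < 2 ^ Suc k"
  shows "Fminus (\<lambda>i. X i \<omega>) n \<le> upper_level \<epsilon> k"
proof -
  define \<sigma> where "\<sigma> = upper_level \<epsilon> k"
  obtain m where m: "m \<le> K"
    "\<omega> \<notin> dominated_upto (2 ^ Suc k) (segment_point j1 j2 \<sigma> (real m * \<sigma> / real (Suc K)))"
    using assms(2) by (auto simp: segment_event_def \<sigma>_def)
  have "0 \<le> \<sigma>" using upper_level_nonneg assms(4,5) by (simp add: \<sigma>_def)
  then have "Fminus (\<lambda>i. X i \<omega>) n \<le> coord_sum (segment_point j1 j2 \<sigma> (real m * \<sigma> / real (Suc K)))"
    using assms segment_points_spread(1)[OF assms(3), where K = K] m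
    by (intro Fminus_le_if_not_dominated_upto[where N = "2 ^ Suc k"]) auto
  then show ?thesis by (simp add: coord_sum_segment_point \<sigma>_def)
qed

lemma summable_prob_segment_event:
  assumes "j1 \<noteq> j2" "0 \<le> \<epsilon>" "1 < \<epsilon> * real (Suc K)"
  shows "summable (\<lambda>k. prob (segment_event \<epsilon> K j1 j2 k))"
proof (rule summable_comparison_test_ev)
  show "eventually (\<lambda>k. norm (prob (segment_event \<epsilon> K j1 j2 k))
      \<le> 2 * real (Suc K) ^ 2 * exp (- ln 2 / real (Suc K)) ^ k
        + 2 ^ Suc K * (real k * ln 2) powr (- (\<epsilon> * real (Suc K)))) sequentially"
    using eventually_ge_at_top[of 2] by eventually_elim (use prob_segment_event_le assms in auto)
  show "summable (\<lambda>k. 2 * real (Suc K) ^ 2 * exp (- ln 2 / real (Suc K)) ^ k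
        + 2 ^ Suc K * (real k * ln 2) powr (- (\<epsilon> * real (Suc K))))"
    using assms(3) by (intro summable_add summable_mult summable_geometric summable_mult_powr_neg) auto
qed

lemma AE_eventually_Fminus_le:
  assumes \<epsilon>: "\<epsilon> > 0" and j: "(j1 :: 'd) \<noteq> j2"
  shows "AE \<omega> in M. eventually (\<lambda>n. Fminus (\<lambda>i. X i \<omega>) n \<le> ln (real n) + \<epsilon> * ln (ln (real n))) sequentially"
proof -
  obtain K :: nat where "1 / \<epsilon> < real K" using reals_Archimedean2 by blast
  then have "1 < \<epsilon> * real (Suc K)"
    using \<epsilon> by (simp add: field_simps)
  then have "summable (\<lambda>k. prob (segment_event \<epsilon> K j1 j2 k))"
    using j \<epsilon> by (intro summable_prob_segment_event) auto
  then have "AE \<omega> in M. eventually (\<lambda>k. \<omega> \<in> space M - segment_event \<epsilon> K j1 j2 k) sequentially"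
    by (intro borel_cantelli_AE1) (auto simp: segment_event_in_events emeasure_eq_measure)
  then show ?thesis
    using AE_positive_outcomes
  proof eventually_elim
    case (elim \<omega>)
    have "eventually (\<lambda>k. \<omega> \<notin> segment_event \<epsilon> K j1 j2 k \<and> 2 \<le> k) sequentially"
      using elim(1) eventually_ge_at_top[of 2] by eventually_elim auto
    then show ?case
    proof (rule eventually_sequentially_dyadic)
      fix k n :: nat
      assume k: "\<omega> \<notin> segment_event \<epsilon> K j1 j2 k \<and> 2 \<le> k" and n: "2 ^ k \<le> n" "n < 2 ^ Suc k"
      then have "Fminus (\<lambda>i. X i \<omega>) n \<le> upper_level \<epsilon> k"
        using elim(2) j \<epsilon> by (intro Fminus_le_upper_level_if_not_segment_event) auto
      also have "\<dots> \<le> ln (real n) + \<epsilon> * ln (ln (real n))"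
        using upper_level_le_ln_plus_ln_ln \<epsilon> k n by simp
      finally show "Fminus (\<lambda>i. X i \<omega>) n \<le> ln (real n) + \<epsilon> * ln (ln (real n))" .
    qed
  qed
qed

lemma AE_Fminus_normalized_tendsto_zero:
  assumes "CARD('d) \<ge> 2"
  shows "AE \<omega> in M. (\<lambda>n. (Fminus (\<lambda>i. X i \<omega>) n - ln (real n)) / ln (ln (real n))) \<longlonglongrightarrow> 0"
proof -
  obtain j1 j2 :: 'd where j: "j1 \<noteq> j2"
    using assms card_le_Suc0_iff_eq[of "UNIV :: 'd set"] by force
  have "AE \<omega> in M. \<forall>r::nat. eventually (\<lambda>n. \<bar>Fminus (\<lambda>i. X i \<omega>) n - ln (real n)\<bar>
      \<le> ln (ln (real n)) / real (Suc r)) sequentially"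
  proof (subst AE_all_countable, intro allI)
    fix r :: nat
    have r: "inverse (real (Suc r)) > 0" by simp
    show "AE \<omega> in M. eventually (\<lambda>n. \<bar>Fminus (\<lambda>i. X i \<omega>) n - ln (real n)\<bar>
      \<le> ln (ln (real n)) / real (Suc r)) sequentially"
      using AE_eventually_Fminus_ge[OF r] AE_eventually_Fminus_le[OF r j]
    proof eventually_elim
      case (elim \<omega>)
      then show ?case
        by eventually_elim (simp add: abs_le_iff field_simps)
    qed
  qed
  then show ?thesis
  proof eventually_elim
    case (elim \<omega>)
    then show ?case
      using eventually_ln_ln_pos by (intro tendsto_divide_zero_if_eventually_abs_le) auto
  qed
qed

end

theorem corollary1p10:
  fixes M :: "'a measure" and X :: "nat \<Rightarrow> 'a \<Rightarrow> real^'d"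
  assumes "prob_space M"
    and "prob_space.indep_vars M (\<lambda>_. borel) (\<lambda>(i, j) \<omega>. X i \<omega> $ j) ({1..} \<times> UNIV)"
    and "\<And>i j. i \<ge> 1 \<Longrightarrow>
           distributed M lborel (\<lambda>\<omega>. X i \<omega> $ j) (\<lambda>x. ennreal (exponential_density 1 x))"
  shows "(\<forall>\<epsilon>>0. \<forall>\<delta>>0. \<forall>\<^sub>F n in sequentially. \<exists>A\<in>sets M.
            {\<omega>\<in>space M. \<bar>(Fminus (\<lambda>i. X i \<omega>) n - ln (real n)) / ln (ln (real n))\<bar> > \<epsilon>} \<subseteq> A
            \<and> measure M A < \<delta>)
       \<and> (CARD('d) \<ge> 2 \<longrightarrow>
            (AE \<omega> in M. (\<lambda>n. (Fminus (\<lambda>i. X i \<omega>) n - ln (real n)) / ln (ln (real n)))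
                          \<longlonglongrightarrow> 0))"
proof -
  interpret exponential_sample M X
    by (intro exponential_sample.intro exponential_sample_axioms.intro assms)
  show ?thesis
    using Fminus_normalized_in_probability AE_Fminus_normalized_tendsto_zero by blast
qed

end
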